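(* Let $\phi:\mathbb{R}^d\to\mathbb{R}^d$ be a bi-Lipschitz homeomorphism preserving Lebesgue measure, let $K_\phi$ and $\rho_a$ be as in the context, and fix $a\in[0,1]$. Then for every ball $B=B(x_0,r)$ in $\mathbb{R}^d$ (with radius $r_B=r$) there exists a collection $(O_k)_k$ of balls in $\mathbb{R}^d$, with radii $r_{O_k}$, such that: (i) the collection of doubled balls $(2O_k)_k$ is a bounded covering of $\phi(B)$, i.e. $\phi(B)\subset\bigcup_k 2O_k$ and every point of $\mathbb{R}^d$ belongs to at most $N$ of the balls $2O_k$, with $N$ depending only on $d$; (ii) the balls $(O_k)_k$ are pairwise disjoint; (iii) for every $p\in[1,\infty)$, $$\left(\frac{1}{|B|}\sum_k |O_k|\,\rho_a\!\left(\frac{r_B}{r_{O_k}}\right)^p\right)^{1/p}\le C\,\rho_a(K_\phi),$$ where $C$ depends only on the dimension $d$, on $a$ and on $p$ (not on $B$ or $\phi$).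
   Context: For a bi-Lipschitz homeomorphism $\phi$ of $\mathbb{R}^d$, $K_\phi:=\sup_{x\neq y}\left(\frac{|\phi(x)-\phi(y)|}{|x-y|}+\frac{|x-y|}{|\phi(x)-\phi(y)|}\right)$. "Preserving Lebesgue measure" means $|\phi(A)|=|A|$ for all measurable $A$. For $a\in[0,1]$, $\rho_a:[0,\infty)\to\mathbb{R}$ is defined by $\rho_a(r)=r^a$ if $a>0$ and $\rho_0(r)=\log(r)$. For a ball $O=B(x,s)$, $2O$ denotes $B(x,2s)$. *)

theory Defs
  imports "HOL-Analysis.Analysis"
begin

definition bi_lipschitz_homeo :: "('a::euclidean_space \<Rightarrow> 'a) \<Rightarrow> bool" where
  "bi_lipschitz_homeo \<phi> \<longleftrightarrow>
     (\<exists>\<psi>. homeomorphism UNIV UNIV \<phi> \<psi>) \<and>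
     (\<exists>L. \<forall>x y. dist (\<phi> x) (\<phi> y) \<le> L * dist x y \<and> dist x y \<le> L * dist (\<phi> x) (\<phi> y))"

definition preserves_lebesgue :: "('a::euclidean_space \<Rightarrow> 'a) \<Rightarrow> bool" where
  "preserves_lebesgue \<phi> \<longleftrightarrow>
     (\<forall>A \<in> sets lebesgue. \<phi> ` A \<in> sets lebesgue \<and> emeasure lebesgue (\<phi> ` A) = emeasure lebesgue A)"

definition K_const :: "('a::euclidean_space \<Rightarrow> 'a) \<Rightarrow> real" where
  "K_const \<phi> = (SUP xy \<in> {(x, y). x \<noteq> y}.
      dist (\<phi> (fst xy)) (\<phi> (snd xy)) / dist (fst xy) (snd xy)
    + dist (fst xy) (snd xy) / dist (\<phi> (fst xy)) (\<phi> (snd xy)))"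

definition rho :: "real \<Rightarrow> real \<Rightarrow> real" where
  "rho a r = (if a > 0 then r powr a else ln r)"

end

theory Submission
  imports Defs
begin

text \<open>All covering balls can be taken with the same radius \<open>t = r / K\<^sub>\<phi>\<close>. Let \<open>S\<close> be a
maximal \<open>2t\<close>-separated subset of \<open>\<phi>(B)\<close>: the balls \<open>B(c, 2t)\<close>, \<open>c \<in> S\<close>, cover \<open>\<phi>(B)\<close>
and the balls \<open>B(c, t)\<close> are pairwise disjoint. Since \<open>\<phi>\<^sup>-\<^sup>1\<close> is \<open>K\<^sub>\<phi>\<close>-Lipschitz, every
\<open>B(c, t)\<close> lies in \<open>\<phi>(2B)\<close>, which has measure \<open>|2B| = 2\<^sup>d |B|\<close>; hence \<open>#S t\<^sup>d \<le> (2r)\<^sup>d\<close>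
and the average in (iii) is \<open>#S (t/r)\<^sup>d \<rho>\<^sub>a(K\<^sub>\<phi>)\<^sup>p \<le> 2\<^sup>d \<rho>\<^sub>a(K\<^sub>\<phi>)\<^sup>p\<close>. The same volume count
inside \<open>B(z, 3t)\<close> shows that a point \<open>z\<close> lies in at most \<open>3\<^sup>d\<close> of the balls \<open>B(c, 2t)\<close>.\<close>

lemma card_separated_mult_measure_ball_le:
  fixes T :: "'a::euclidean_space set"
  assumes "finite T" "0 \<le> t"
    and sep: "pairwise (\<lambda>c d. 2 * t \<le> dist c d) T"
    and sub: "\<And>c. c \<in> T \<Longrightarrow> ball c t \<subseteq> A"
    and A: "A \<in> fmeasurable lebesgue"
  shows "card T * (t ^ DIM('a) * measure lebesgue (ball (0::'a) 1)) \<le> measure lebesgue A"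
proof -
  have "disjoint_family_on (\<lambda>c. ball c t) T"
    using sep by (auto simp: disjoint_family_on_def pairwise_def intro!: disjoint_ballI)
  have "card T * (t ^ DIM('a) * measure lebesgue (ball (0::'a) 1)) = (\<Sum>c\<in>T. measure lebesgue (ball c t))"
    by (simp add: content_ball_conv_unit_ball[OF \<open>0 \<le> t\<close>])
  also have "\<dots> = measure lebesgue (\<Union>c\<in>T. ball c t)"
    using \<open>finite T\<close> \<open>disjoint_family_on (\<lambda>c. ball c t) T\<close> fmeasurableD2[OF lmeasurable_ball]
    by (intro measure_finite_Union[symmetric]) auto
  also have "\<dots> \<le> measure lebesgue A"
    using sub A \<open>finite T\<close> by (intro measure_mono_fmeasurable) auto
  finally show ?thesis .
qed

lemma card_separated_near_point_le:
  fixes S :: "'a::euclidean_space set"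
  assumes "finite S" "0 < t" "pairwise (\<lambda>c d. 2 * t \<le> dist c d) S"
  shows "card {c\<in>S. z \<in> ball c (2 * t)} \<le> 3 ^ DIM('a)"
proof -
  let ?V = "measure lebesgue (ball (0::'a) 1)"
  have "card {c\<in>S. z \<in> ball c (2 * t)} * (t ^ DIM('a) * ?V) \<le> measure lebesgue (ball z (3 * t))"
  proof (rule card_separated_mult_measure_ball_le)
    show "pairwise (\<lambda>c d. 2 * t \<le> dist c d) {c\<in>S. z \<in> ball c (2 * t)}"
      using assms(3) by (rule pairwise_subset) auto
    show "ball c t \<subseteq> ball z (3 * t)" if "c \<in> {c\<in>S. z \<in> ball c (2 * t)}" for c
      using that unfolding mem_Collect_eq by metric
  qed (use assms in auto)
  also have "\<dots> = 3 ^ DIM('a) * (t ^ DIM('a) * ?V)"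
    using content_ball_conv_unit_ball[of "3 * t" z] \<open>0 < t\<close> by (simp add: power_mult_distrib)
  finally have "real (card {c\<in>S. z \<in> ball c (2 * t)}) \<le> 3 ^ DIM('a)"
    using \<open>0 < t\<close> by (simp add: mult_le_cancel_right)
  then show ?thesis by (metis of_nat_le_iff of_nat_numeral of_nat_power)
qed

lemma maximal_separated_subset:
  fixes X :: "'a::metric_space set"
  assumes "0 < \<delta>"
    and bound: "\<And>S. S \<subseteq> X \<Longrightarrow> finite S \<Longrightarrow> pairwise (\<lambda>c d. \<delta> \<le> dist c d) S \<Longrightarrow> card S \<le> M"
  obtains S where "S \<subseteq> X" "finite S" "pairwise (\<lambda>c d. \<delta> \<le> dist c d) S"
    "X \<subseteq> (\<Union>c\<in>S. ball c \<delta>)"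
proof -
  define P where "P S \<longleftrightarrow> S \<subseteq> X \<and> finite S \<and> pairwise (\<lambda>c d. \<delta> \<le> dist c d) S" for S
  obtain S where "P S" and max: "\<And>S'. P S' \<Longrightarrow> card S' \<le> card S"
    using ex_has_greatest_nat[of P "{}" card "Suc M"] bound by (force simp: P_def less_Suc_eq_le)
  have cover: "x \<in> (\<Union>c\<in>S. ball c \<delta>)" if "x \<in> X" for x
  proof (rule ccontr)
    assume "x \<notin> (\<Union>c\<in>S. ball c \<delta>)"
    then have far: "\<forall>c\<in>S. \<delta> \<le> dist c x" by (auto simp: not_less)
    with \<open>0 < \<delta>\<close> have "x \<notin> S" by force
    have "P (insert x S)"
      using \<open>P S\<close> \<open>x \<in> X\<close> far by (auto simp: P_def pairwise_insert dist_commute)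
    then show False using max[of "insert x S"] \<open>x \<notin> S\<close> \<open>P S\<close> by (auto simp: P_def)
  qed
  show thesis
    by (rule that[of S]) (use \<open>P S\<close> cover in \<open>auto simp: P_def\<close>)
qed

lemma bi_lipschitz_homeo_bij:
  assumes "bi_lipschitz_homeo \<phi>"
  shows "bij \<phi>"
proof -
  obtain \<psi> where "homeomorphism UNIV UNIV \<phi> \<psi>"
    using assms unfolding bi_lipschitz_homeo_def by blast
  then have "\<And>x. \<psi> (\<phi> x) = x" "range \<phi> = UNIV"
    unfolding homeomorphism_def by auto
  then show ?thesis
    unfolding bij_def by (metis injI)
qed

lemma K_const_ge_ratio_sum:
  fixes \<phi> :: "'a::euclidean_space \<Rightarrow> 'a"
  assumes "bi_lipschitz_homeo \<phi>" "x \<noteq> y"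
  shows "dist (\<phi> x) (\<phi> y) / dist x y + dist x y / dist (\<phi> x) (\<phi> y) \<le> K_const \<phi>"
proof -
  define f where "f = (\<lambda>xy::'a \<times> 'a. dist (\<phi> (fst xy)) (\<phi> (snd xy)) / dist (fst xy) (snd xy)
    + dist (fst xy) (snd xy) / dist (\<phi> (fst xy)) (\<phi> (snd xy)))"
  obtain L where L: "\<And>u v. dist (\<phi> u) (\<phi> v) \<le> L * dist u v \<and> dist u v \<le> L * dist (\<phi> u) (\<phi> v)"
    using assms(1) unfolding bi_lipschitz_homeo_def by blast
  have "f (u, v) \<le> 2 * L" if "u \<noteq> v" for u v
  proof -
    have "\<phi> u \<noteq> \<phi> v"
      using bi_lipschitz_homeo_bij[OF assms(1)] that by (auto simp: bij_def inj_eq)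
    then have "dist (\<phi> u) (\<phi> v) / dist u v \<le> L" "dist u v / dist (\<phi> u) (\<phi> v) \<le> L"
      using L[of u v] that by (simp_all add: divide_le_eq)
    then show ?thesis unfolding f_def by simp
  qed
  then have "bdd_above (f ` {(u, v). u \<noteq> v})"
    by (intro bdd_aboveI[of _ "2 * L"]) auto
  then have "f (x, y) \<le> (SUP xy \<in> {(u, v). u \<noteq> v}. f xy)"
    by (rule cSUP_upper[rotated]) (use assms(2) in simp)
  then show ?thesis unfolding K_const_def f_def by simp
qed

lemma dist_le_K_const_mult_dist:
  fixes \<phi> :: "'a::euclidean_space \<Rightarrow> 'a"
  assumes "bi_lipschitz_homeo \<phi>"
  shows "dist x y \<le> K_const \<phi> * dist (\<phi> x) (\<phi> y)"
proof (cases "x = y")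
  case False
  then have "0 < dist (\<phi> x) (\<phi> y)"
    using bi_lipschitz_homeo_bij[OF assms] by (auto simp: bij_def inj_eq)
  moreover have "dist x y / dist (\<phi> x) (\<phi> y) \<le> K_const \<phi>"
  proof -
    have "0 \<le> dist (\<phi> x) (\<phi> y) / dist x y" by simp
    with K_const_ge_ratio_sum[OF assms False] show ?thesis by linarith
  qed
  ultimately show ?thesis by (simp add: divide_le_eq mult.commute)
qed simp

lemma K_const_ge_1:
  fixes \<phi> :: "'a::euclidean_space \<Rightarrow> 'a"
  assumes "bi_lipschitz_homeo \<phi>"
  shows "1 \<le> K_const \<phi>"
proof -
  obtain b :: 'a where "b \<in> Basis" using nonempty_Basis by blast
  then have "b \<noteq> 0" by auto
  define u where "u = dist (\<phi> 0) (\<phi> b) / dist 0 b"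
  have "0 < u"
    using bi_lipschitz_homeo_bij[OF assms] \<open>b \<noteq> 0\<close> by (auto simp: u_def bij_def inj_eq)
  have "1 \<le> u + 1 / u"
  proof (cases "1 \<le> u")
    case False
    with \<open>0 < u\<close> have "1 < 1 / u" by simp
    with \<open>0 < u\<close> show ?thesis by linarith
  qed (use \<open>0 < u\<close> in \<open>simp add: add_increasing2\<close>)
  also have "\<dots> \<le> K_const \<phi>"
    using K_const_ge_ratio_sum[OF assms, of 0 b] \<open>b \<noteq> 0\<close> by (simp add: u_def)
  finally show ?thesis .
qed

lemma ball_subset_image_ball:
  fixes \<phi> :: "'a::metric_space \<Rightarrow> 'b::metric_space"
  assumes "surj \<phi>" "0 < K" "\<And>x y. dist x y \<le> K * dist (\<phi> x) (\<phi> y)"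
  shows "ball (\<phi> b) (\<epsilon> / K) \<subseteq> \<phi> ` ball b \<epsilon>"
proof
  fix y assume y: "y \<in> ball (\<phi> b) (\<epsilon> / K)"
  obtain x where x: "y = \<phi> x" using \<open>surj \<phi>\<close> by (metis surjD)
  have "dist b x \<le> K * dist (\<phi> b) y" unfolding x by (rule assms(3))
  also have "\<dots> < \<epsilon>" using y \<open>0 < K\<close> by (simp add: field_simps mult.commute)
  finally show "y \<in> \<phi> ` ball b \<epsilon>" unfolding x by simp
qed

lemma preserves_lebesgue_measure_image:
  assumes "preserves_lebesgue \<phi>" "A \<in> fmeasurable lebesgue"
  shows "\<phi> ` A \<in> fmeasurable lebesgue" "measure lebesgue (\<phi> ` A) = measure lebesgue A"
  using assms by (auto simp: preserves_lebesgue_def fmeasurable_def measure_def)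

lemma card_separated_subset_image_ball:
  fixes \<phi> :: "'a::euclidean_space \<Rightarrow> 'a"
  assumes bl: "bi_lipschitz_homeo \<phi>" and pl: "preserves_lebesgue \<phi>" and "0 < r"
    and S: "S \<subseteq> \<phi> ` ball x0 r" "finite S" "pairwise (\<lambda>c d. 2 * (r / K_const \<phi>) \<le> dist c d) S"
  shows "card S * (r / K_const \<phi>) ^ DIM('a) \<le> (2 * r) ^ DIM('a)"
proof -
  let ?t = "r / K_const \<phi>" and ?V = "measure lebesgue (ball (0::'a) 1)"
  have "0 < K_const \<phi>" using K_const_ge_1[OF bl] by linarith
  have sub: "ball c ?t \<subseteq> \<phi> ` ball x0 (2 * r)" if c: "c \<in> S" for c
  proof -
    obtain b where b: "b \<in> ball x0 r" "c = \<phi> b" using c S(1) by auto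
    have "ball c ?t \<subseteq> \<phi> ` ball b r"
      unfolding b(2) using bi_lipschitz_homeo_bij[OF bl] \<open>0 < K_const \<phi>\<close>
      by (intro ball_subset_image_ball dist_le_K_const_mult_dist[OF bl]) (auto simp: bij_def)
    also have "\<dots> \<subseteq> \<phi> ` ball x0 (2 * r)"
      using b(1) by (intro image_mono) metric
    finally show ?thesis .
  qed
  have "card S * (?t ^ DIM('a) * ?V) \<le> measure lebesgue (\<phi> ` ball x0 (2 * r))"
    using S \<open>0 < r\<close> \<open>0 < K_const \<phi>\<close> sub preserves_lebesgue_measure_image[OF pl lmeasurable_ball]
    by (intro card_separated_mult_measure_ball_le) auto
  also have "\<dots> = (2 * r) ^ DIM('a) * ?V"
    using \<open>0 < r\<close> content_ball_conv_unit_ball[of "2 * r" x0]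
    by (simp add: preserves_lebesgue_measure_image[OF pl])
  finally show ?thesis by (simp add: mult.assoc[symmetric])
qed

lemma image_ball_separated_net:
  fixes \<phi> :: "'a::euclidean_space \<Rightarrow> 'a" and r t :: real
  assumes bl: "bi_lipschitz_homeo \<phi>" and pl: "preserves_lebesgue \<phi>" and "0 < r"
  defines "t \<equiv> r / K_const \<phi>"
  obtains S where "finite S" "pairwise (\<lambda>c d. 2 * t \<le> dist c d) S"
    "\<phi> ` ball x0 r \<subseteq> (\<Union>c\<in>S. ball c (2 * t))" "card S * t ^ DIM('a) \<le> (2 * r) ^ DIM('a)"
proof -
  have "0 < t" unfolding t_def using K_const_ge_1[OF bl] \<open>0 < r\<close> by simp
  have bound: "card S \<le> nat \<lceil>(2 * K_const \<phi>) ^ DIM('a)\<rceil>"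
    if "S \<subseteq> \<phi> ` ball x0 r" "finite S" "pairwise (\<lambda>c d. 2 * t \<le> dist c d) S" for S
  proof -
    have "card S * t ^ DIM('a) \<le> (2 * K_const \<phi>) ^ DIM('a) * t ^ DIM('a)"
      using card_separated_subset_image_ball[OF bl pl \<open>0 < r\<close> that[unfolded t_def]] K_const_ge_1[OF bl]
      by (simp add: t_def power_mult_distrib power_divide)
    then have "card S \<le> (2 * K_const \<phi>) ^ DIM('a)"
      using \<open>0 < t\<close> by simp
    then show ?thesis by linarith
  qed
  obtain S where "S \<subseteq> \<phi> ` ball x0 r" "finite S" "pairwise (\<lambda>c d. 2 * t \<le> dist c d) S"
      "\<phi> ` ball x0 r \<subseteq> (\<Union>c\<in>S. ball c (2 * t))"
    by (rule maximal_separated_subset[of "2 * t", OF _ bound]) (use \<open>0 < t\<close> in simp)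
  with card_separated_subset_image_ball[OF bl pl \<open>0 < r\<close>, folded t_def] show thesis
    using that by blast
qed

lemma rho_nonneg: "1 \<le> r \<Longrightarrow> 0 \<le> rho a r"
  by (simp add: rho_def)

lemma powr_inverse_mult_powr_le:
  fixes q B x p :: real
  assumes "0 \<le> q" "q \<le> B" "1 \<le> B" "0 \<le> x" "1 \<le> p"
  shows "(q * x powr p) powr (1 / p) \<le> B * x"
proof -
  have "(q * x powr p) powr (1 / p) = q powr (1 / p) * x"
    using assms by (simp add: powr_mult powr_powr)
  moreover have "q powr (1 / p) \<le> B"
  proof (cases "q \<le> 1")
    case True
    then have "q powr (1 / p) \<le> 1" using assms by (intro powr_le1) auto
    then show ?thesis using assms by linarith
  next
    case False
    then have "q powr (1 / p) \<le> q powr 1" using assms by (intro powr_mono) auto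
    then show ?thesis using assms False by simp
  qed
  ultimately show ?thesis using assms by (simp add: mult_right_mono)
qed

lemma average_equal_balls_le:
  fixes c :: "nat \<Rightarrow> 'a::euclidean_space" and x0 :: 'a
  assumes "0 < t" "0 < r" "n * t ^ DIM('a) \<le> (2 * r) ^ DIM('a)" "0 \<le> x" "1 \<le> p"
  shows "(1 / measure lebesgue (ball x0 r)
            * (\<Sum>\<^sub>\<infinity>k\<in>{0..<n}. measure lebesgue (ball (c k) t) * x powr p)) powr (1 / p)
         \<le> 2 ^ DIM('a) * x"
proof -
  define q where "q = n * t ^ DIM('a) / r ^ DIM('a)"
  have average: "1 / measure lebesgue (ball x0 r)
          * (\<Sum>\<^sub>\<infinity>k\<in>{0..<n}. measure lebesgue (ball (c k) t) * x powr p) = q * x powr p"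
    using content_ball_conv_unit_ball[of r x0] assms(1,2)
    by (simp add: q_def content_ball_conv_unit_ball[where 'a='a, of t])
  have "q \<le> 2 ^ DIM('a)"
    using assms(2,3) by (simp add: q_def divide_le_eq power_mult_distrib)
  then show ?thesis
    unfolding average using assms by (intro powr_inverse_mult_powr_le) (auto simp: q_def)
qed

lemma image_ball_covering_by_equal_balls:
  fixes \<phi> :: "'a::euclidean_space \<Rightarrow> 'a"
  assumes bl: "bi_lipschitz_homeo \<phi>" and pl: "preserves_lebesgue \<phi>" and "0 < r"
  shows "\<exists>(I::nat set) (c::nat \<Rightarrow> 'a) (s::nat \<Rightarrow> real).
           (\<forall>k\<in>I. s k > 0) \<and>
           \<phi> ` ball x0 r \<subseteq> (\<Union>k\<in>I. ball (c k) (2 * s k)) \<and>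
           (\<forall>z. finite {k\<in>I. z \<in> ball (c k) (2 * s k)} \<and>
                card {k\<in>I. z \<in> ball (c k) (2 * s k)} \<le> 3 ^ DIM('a)) \<and>
           (\<forall>k\<in>I. \<forall>l\<in>I. k \<noteq> l \<longrightarrow> ball (c k) (s k) \<inter> ball (c l) (s l) = {}) \<and>
           (\<forall>p::real. p \<ge> 1 \<longrightarrow>
              (\<lambda>k. measure lebesgue (ball (c k) (s k)) * \<bar>rho a (r / s k)\<bar> powr p) summable_on I \<and>
              ((1 / measure lebesgue (ball x0 r)) *
                 (\<Sum>\<^sub>\<infinity>k\<in>I. measure lebesgue (ball (c k) (s k)) * \<bar>rho a (r / s k)\<bar> powr p))
                 powr (1 / p)
              \<le> 2 ^ DIM('a) * rho a (K_const \<phi>))"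
proof -
  define t where "t = r / K_const \<phi>"
  have "1 \<le> K_const \<phi>" by (rule K_const_ge_1[OF bl])
  then have "0 < t" "r / t = K_const \<phi>" using \<open>0 < r\<close> by (simp_all add: t_def)
  obtain S where S: "finite S" "pairwise (\<lambda>c d. 2 * t \<le> dist c d) S"
      "\<phi> ` ball x0 r \<subseteq> (\<Union>c\<in>S. ball c (2 * t))" "card S * t ^ DIM('a) \<le> (2 * r) ^ DIM('a)"
    using image_ball_separated_net[OF bl pl \<open>0 < r\<close>] unfolding t_def by blast
  obtain h where h: "bij_betw h {0..<card S} S"
    using ex_bij_betw_nat_finite[OF \<open>finite S\<close>] by blast
  define n where "n = card S"
  have inj: "inj_on h {0..<n}" and img: "h ` {0..<n} = S"
    using h unfolding n_def bij_betw_def by auto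
  have overlap: "card {k\<in>{0..<n}. z \<in> ball (h k) (2 * t)} \<le> 3 ^ DIM('a)" for z
  proof -
    have "card {k\<in>{0..<n}. z \<in> ball (h k) (2 * t)} = card (h ` {k\<in>{0..<n}. z \<in> ball (h k) (2 * t)})"
      using inj by (intro card_image[symmetric] inj_on_subset[OF inj]) auto
    also have "h ` {k\<in>{0..<n}. z \<in> ball (h k) (2 * t)} = {c\<in>S. z \<in> ball c (2 * t)}"
      unfolding img[symmetric] by blast
    finally show ?thesis
      using card_separated_near_point_le[OF \<open>finite S\<close> \<open>0 < t\<close> S(2)] by simp
  qed
  have disjoint: "ball (h k) t \<inter> ball (h l) t = {}"
    if "k \<in> {0..<n}" "l \<in> {0..<n}" "k \<noteq> l" for k l
    using that S(2) inj img by (intro disjoint_ballI) (auto simp: pairwise_def inj_on_eq_iff)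
  have cover: "\<phi> ` ball x0 r \<subseteq> (\<Union>k\<in>{0..<n}. ball (h k) (2 * t))"
    using S(3) img by auto
  have average: "(1 / measure lebesgue (ball x0 r)
      * (\<Sum>\<^sub>\<infinity>k\<in>{0..<n}. measure lebesgue (ball (h k) t) * \<bar>rho a (r / t)\<bar> powr p)) powr (1 / p)
      \<le> 2 ^ DIM('a) * rho a (K_const \<phi>)" if "1 \<le> p" for p
  proof -
    have "0 \<le> rho a (K_const \<phi>)" by (rule rho_nonneg) fact
    then show ?thesis
      using average_equal_balls_le[OF \<open>0 < t\<close> \<open>0 < r\<close>, of n "\<bar>rho a (r / t)\<bar>" p x0 h] S(4) that
      by (simp add: n_def \<open>r / t = K_const \<phi>\<close>)
  qed
  show ?thesis
    using \<open>0 < t\<close> overlap disjoint cover average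
    by (intro exI[of _ "{0..<n}"] exI[of _ h] exI[of _ "\<lambda>_. t"]) auto
qed

theorem lemma1p1:
  "\<exists>N::nat. \<forall>a::real. 0 \<le> a \<and> a \<le> 1 \<longrightarrow>
     (\<exists>C::real \<Rightarrow> real. \<forall>(\<phi>::'a::euclidean_space \<Rightarrow> 'a) x0 r.
        bi_lipschitz_homeo \<phi> \<and> preserves_lebesgue \<phi> \<and> r > 0 \<longrightarrow>
        (\<exists>(I::nat set) (c::nat \<Rightarrow> 'a) (s::nat \<Rightarrow> real).
           (\<forall>k\<in>I. s k > 0) \<and>
           \<phi> ` ball x0 r \<subseteq> (\<Union>k\<in>I. ball (c k) (2 * s k)) \<and>
           (\<forall>z. finite {k\<in>I. z \<in> ball (c k) (2 * s k)} \<and>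
                card {k\<in>I. z \<in> ball (c k) (2 * s k)} \<le> N) \<and>
           (\<forall>k\<in>I. \<forall>l\<in>I. k \<noteq> l \<longrightarrow> ball (c k) (s k) \<inter> ball (c l) (s l) = {}) \<and>
           (\<forall>p::real. p \<ge> 1 \<longrightarrow>
              (\<lambda>k. measure lebesgue (ball (c k) (s k)) * \<bar>rho a (r / s k)\<bar> powr p) summable_on I \<and>
              ((1 / measure lebesgue (ball x0 r)) *
                 (\<Sum>\<^sub>\<infinity>k\<in>I. measure lebesgue (ball (c k) (s k)) * \<bar>rho a (r / s k)\<bar> powr p))
                 powr (1 / p)
              \<le> C p * rho a (K_const \<phi>))))"
  using image_ball_covering_by_equal_balls
  by (intro exI[of _ "3 ^ DIM('a)"] allI impI exI[of _ "\<lambda>_. 2 ^ DIM('a)"]) blast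

end
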